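(* Let $p,q,r>0$ with $p+q+r=1$ and $q>p$, and consider the Markov chain on $\{0,1,2,\dots\}$ with $P(0,1)=1$ and, for $n\ge1$, $P(n,n-1)=q$, $P(n,n)=r$, $P(n,n+1)=p$, started at $X_0=0$; let $\mu_t$ be the distribution of $X_t$ and $\nu$ the stationary distribution. Let $$A=\frac{(1+q-p)(q+r)-q}{(1+q-p)(1-2p)},\qquad B=\frac{\frac{p}{q+r}\left(1+\frac{1}{\sqrt{pq}-p}\right)}{\left(1-\sqrt{\frac{p}{q}}\frac{r+(1+q-p)}{2(q+r)}\right)\left(1+\sqrt{\frac{p}{q}}\frac{r-(1+q-p)}{2(q+r)}\right)}.$$ If $\frac{q}{q+r}>r+2\sqrt{pq}$, then for all sufficiently large $t$, $$\|\nu-\mu_t\|_{TV}\ge A\left(\frac{q}{q+r}\right)^t - B\left(r+2\sqrt{pq}\right)^t.$$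
   Context: The stationary distribution is $\nu=\pi/\rho$ where $\pi_0=1$, $\pi_n=p^{n-1}/q^n$ ($n\ge1$) and $\rho=\sum_n\pi_n$. Total variation distance: $\|\nu-\mu\|_{TV}=\frac12\sum_{x}|\nu(x)-\mu(x)|$. *)

theory Defs
  imports "HOL-Analysis.Analysis"
begin

definition trans :: "real \<Rightarrow> real \<Rightarrow> real \<Rightarrow> nat \<Rightarrow> nat \<Rightarrow> real" where
  "trans p q r x y =
     (if x = 0 then (if y = 1 then 1 else 0)
      else if y = x - 1 then q
      else if y = x then r
      else if y = x + 1 then p
      else 0)"

fun mu :: "real \<Rightarrow> real \<Rightarrow> real \<Rightarrow> nat \<Rightarrow> nat \<Rightarrow> real" where
  "mu p q r 0 y = (if y = 0 then 1 else 0)"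
| "mu p q r (Suc t) y = (\<Sum>\<^sub>\<infinity>x\<in>UNIV. mu p q r t x * trans p q r x y)"

text \<open>Unnormalised stationary weights: pi_0 = 1, pi_n = p^(n-1)/q^n.\<close>
definition piw :: "real \<Rightarrow> real \<Rightarrow> nat \<Rightarrow> real" where
  "piw p q n = (if n = 0 then 1 else p ^ (n - 1) / q ^ n)"

definition stat :: "real \<Rightarrow> real \<Rightarrow> nat \<Rightarrow> real" where
  "stat p q n = piw p q n / (\<Sum>\<^sub>\<infinity>m\<in>UNIV. piw p q m)"

definition tv_dist :: "(nat \<Rightarrow> real) \<Rightarrow> (nat \<Rightarrow> real) \<Rightarrow> real" where
  "tv_dist a b = (1/2) * (\<Sum>\<^sub>\<infinity>x\<in>UNIV. \<bar>a x - b x\<bar>)"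

end

(* Writing G for the generating function of the passage time from 1 to 0 and U for that of the
   returns to 0, reversibility gives mu_t(y) = pi_y [z^t] U G^y. Hence the alternating sums
   sum_y (-1)^y mu_t(y) are the coefficients of U V, where V = sum_y (-1)^y pi_y G^y =
   (q - (q + r) G) / (q + p G) is rational in G. The series G converges absolutely on the closed
   disc of radius 1/rho, and there U V has exactly two poles: at 1, with residue
   sum_y (-1)^y nu(y), and at -1/lambda, where lambda = q/(q + r) > rho, with amplitude 2A.
   Multiplied by the denominator, the remainder W left after removing both principal parts is
   absolutely summable on the disc and vanishes at both poles, so its coefficients are o(rho^t).
   Testing the total variation distance against the alternating sign (-1)^y finally gives
   ||nu - mu_t|| >= |2A (-lambda)^t + W_t| / 2. *)
theory Submission
  imports Defs
begin

unbundle no vec_syntax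
unbundle fps_syntax

section \<open>Power series absolutely convergent on a closed disc\<close>

lemma sum_convolution_le_product:
  fixes a b :: "nat \<Rightarrow> real"
  assumes "\<And>n. a n \<ge> 0" "\<And>n. b n \<ge> 0"
  shows "(\<Sum>n<N. \<Sum>i\<le>n. a i * b (n - i)) \<le> (\<Sum>i<N. a i) * (\<Sum>j<N. b j)"
proof -
  have "(\<Sum>n<N. \<Sum>i\<le>n. a i * b (n - i)) = (\<Sum>(i,j)\<in>{(i,j). i + j < N}. a i * b j)"
    using sum.triangle_reindex[of "\<lambda>i j. a i * b j" N] by simp
  also have "\<dots> \<le> (\<Sum>(i,j)\<in>{..<N} \<times> {..<N}. a i * b j)"
    by (rule sum_mono2) (auto intro: mult_nonneg_nonneg assms)
  also have "\<dots> = (\<Sum>i<N. a i) * (\<Sum>j<N. b j)"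
    by (simp add: sum_product sum.cartesian_product)
  finally show ?thesis .
qed

definition fps_abs_psum :: "real \<Rightarrow> nat \<Rightarrow> real fps \<Rightarrow> real" where
  "fps_abs_psum R N f = (\<Sum>n<N. \<bar>f $ n\<bar> * R ^ n)"

definition fps_abs_summable :: "real \<Rightarrow> real fps \<Rightarrow> bool" where
  "fps_abs_summable R f \<longleftrightarrow> summable (\<lambda>n. \<bar>f $ n\<bar> * R ^ n)"

lemma fps_abs_psum_const_mult [simp]:
  "fps_abs_psum R N (fps_const c * f) = \<bar>c\<bar> * fps_abs_psum R N f"
  by (simp add: fps_abs_psum_def abs_mult sum_distrib_left mult.assoc)

lemma fps_abs_psum_const: "fps_abs_psum R N (fps_const c) \<le> \<bar>c\<bar>"
proof -
  have "fps_abs_psum R N (fps_const c) = (\<Sum>n\<in>{..<N} \<inter> {0}. \<bar>c\<bar>)"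
    unfolding fps_abs_psum_def by (rule sum.mono_neutral_cong_right) auto
  also have "\<dots> \<le> \<bar>c\<bar>" by (cases N) auto
  finally show ?thesis .
qed

lemma fps_abs_psum_X_mult: "fps_abs_psum R (Suc N) (fps_X * f) = R * fps_abs_psum R N f"
  unfolding fps_abs_psum_def sum.lessThan_Suc_shift
  by (simp add: sum_distrib_left mult_ac)

context
  fixes R :: real
  assumes R_nonneg: "R \<ge> 0"
begin

lemma fps_abs_psum_nonneg: "fps_abs_psum R N f \<ge> 0"
  unfolding fps_abs_psum_def using R_nonneg by (intro sum_nonneg) simp

lemma fps_abs_psum_add: "fps_abs_psum R N (f + g) \<le> fps_abs_psum R N f + fps_abs_psum R N g"
  unfolding fps_abs_psum_def sum.distrib[symmetric] distrib_right[symmetric]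
  using R_nonneg by (intro sum_mono mult_right_mono abs_triangle_ineq) auto

lemma fps_abs_psum_mult: "fps_abs_psum R N (f * g) \<le> fps_abs_psum R N f * fps_abs_psum R N g"
proof -
  let ?a = "\<lambda>n. \<bar>f $ n\<bar> * R ^ n" and ?b = "\<lambda>n. \<bar>g $ n\<bar> * R ^ n"
  have "\<bar>(f * g) $ n\<bar> * R ^ n \<le> (\<Sum>i\<le>n. ?a i * ?b (n - i))" for n
  proof -
    have "\<bar>(f * g) $ n\<bar> * R ^ n \<le> (\<Sum>i\<le>n. \<bar>f $ i * g $ (n - i)\<bar>) * R ^ n"
      using R_nonneg by (auto simp: fps_mult_nth atLeast0AtMost intro!: mult_right_mono)
    also have "\<dots> = (\<Sum>i\<le>n. ?a i * ?b (n - i))"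
      unfolding sum_distrib_right
      by (intro sum.cong refl) (simp add: abs_mult mult_ac flip: power_add)
    finally show ?thesis .
  qed
  then have "fps_abs_psum R N (f * g) \<le> (\<Sum>n<N. \<Sum>i\<le>n. ?a i * ?b (n - i))"
    unfolding fps_abs_psum_def by (rule sum_mono)
  also have "\<dots> \<le> fps_abs_psum R N f * fps_abs_psum R N g"
    unfolding fps_abs_psum_def using R_nonneg by (intro sum_convolution_le_product) auto
  finally show ?thesis .
qed

lemma fps_abs_summable_iff_bounded:
  "fps_abs_summable R f \<longleftrightarrow> (\<exists>B. \<forall>N. fps_abs_psum R N f \<le> B)"
proof
  assume "fps_abs_summable R f"
  then show "\<exists>B. \<forall>N. fps_abs_psum R N f \<le> B"
    unfolding fps_abs_summable_def fps_abs_psum_def using R_nonneg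
    by (intro exI[of _ "\<Sum>n. \<bar>f $ n\<bar> * R ^ n"] allI sum_le_suminf) auto
next
  assume "\<exists>B. \<forall>N. fps_abs_psum R N f \<le> B"
  then show "fps_abs_summable R f"
    unfolding fps_abs_summable_def fps_abs_psum_def using R_nonneg
    by (auto intro: summableI_nonneg_bounded)
qed

lemma fps_abs_summableI: "(\<And>N. fps_abs_psum R N f \<le> B) \<Longrightarrow> fps_abs_summable R f"
  using fps_abs_summable_iff_bounded by blast

lemma fps_abs_summableE:
  assumes "fps_abs_summable R f"
  obtains B where "\<And>N. fps_abs_psum R N f \<le> B"
  using assms fps_abs_summable_iff_bounded by blast

lemma fps_abs_summable_add:
  assumes "fps_abs_summable R f" "fps_abs_summable R g"
  shows "fps_abs_summable R (f + g)"
proof -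
  obtain B C where "\<And>N. fps_abs_psum R N f \<le> B" "\<And>N. fps_abs_psum R N g \<le> C"
    using assms by (meson fps_abs_summableE)
  then show ?thesis
    by (intro fps_abs_summableI[of _ "B + C"]) (meson add_mono fps_abs_psum_add order_trans)
qed

lemma fps_abs_summable_uminus: "fps_abs_summable R f \<Longrightarrow> fps_abs_summable R (- f)"
  by (simp add: fps_abs_summable_def)

lemma fps_abs_summable_diff:
  "fps_abs_summable R f \<Longrightarrow> fps_abs_summable R g \<Longrightarrow> fps_abs_summable R (f - g)"
  using fps_abs_summable_add[of f "- g"] fps_abs_summable_uminus[of g] by simp

lemma fps_abs_summable_mult:
  assumes "fps_abs_summable R f" "fps_abs_summable R g"
  shows "fps_abs_summable R (f * g)"
proof -
  obtain B C where "\<And>N. fps_abs_psum R N f \<le> B" "\<And>N. fps_abs_psum R N g \<le> C"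
    using assms by (meson fps_abs_summableE)
  then have "fps_abs_psum R N f * fps_abs_psum R N g \<le> B * C" for N
    by (intro mult_mono) (auto intro: order_trans[OF fps_abs_psum_nonneg])
  then show ?thesis
    by (intro fps_abs_summableI[of _ "B * C"]) (meson fps_abs_psum_mult order_trans)
qed

lemma fps_abs_summable_const: "fps_abs_summable R (fps_const c)"
  by (rule fps_abs_summableI[OF fps_abs_psum_const])

lemma fps_abs_summable_1: "fps_abs_summable R 1"
  using fps_abs_summable_const[of 1] by simp

lemma fps_abs_summable_X: "fps_abs_summable R fps_X"
proof (rule fps_abs_summableI)
  fix N
  have "fps_abs_psum R N fps_X = (\<Sum>n\<in>{..<N} \<inter> {1}. R)"
    unfolding fps_abs_psum_def using R_nonneg by (intro sum.mono_neutral_cong_right) auto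
  also have "\<dots> \<le> R" using R_nonneg by (cases "1 < N") auto
  finally show "fps_abs_psum R N fps_X \<le> R" .
qed

lemma fps_abs_summable_inverse:
  assumes f0: "f $ 0 = 0" and small: "\<And>N. fps_abs_psum R N f \<le> c" and "c < 1"
  shows "fps_abs_summable R (inverse (1 - f))"
proof (rule fps_abs_summableI)
  fix N
  let ?h = "inverse (1 - f)"
  have "?h * (1 - f) = 1" using f0 by (intro inverse_mult_eq_1) simp
  then have "?h = 1 + f * ?h" by (simp add: algebra_simps)
  then have "fps_abs_psum R N ?h \<le> fps_abs_psum R N 1 + fps_abs_psum R N f * fps_abs_psum R N ?h"
    by (metis add_left_mono fps_abs_psum_add fps_abs_psum_mult order_trans)
  also have "\<dots> \<le> 1 + c * fps_abs_psum R N ?h"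
    using fps_abs_psum_const[where c=1, unfolded fps_const_1_eq_1] small fps_abs_psum_nonneg
    by (intro add_mono mult_right_mono) simp_all
  finally show "fps_abs_psum R N ?h \<le> 1 / (1 - c)"
    using \<open>c < 1\<close> by (simp add: field_simps)
qed

end

lemmas fps_abs_summable_intros =
  fps_abs_summable_add fps_abs_summable_diff fps_abs_summable_uminus fps_abs_summable_mult
  fps_abs_summable_const fps_abs_summable_1 fps_abs_summable_X

context
  fixes R z :: real and f :: "real fps"
  assumes f: "fps_abs_summable R f" and z: "\<bar>z\<bar> \<le> R"
begin

lemma summable_norm_fps_terms: "summable (\<lambda>n. norm (f $ n * z ^ n))"
proof (rule summable_comparison_test[OF _ f[unfolded fps_abs_summable_def]])
  have "\<bar>z\<bar> ^ n \<le> R ^ n" for n using z by (intro power_mono) auto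
  then show "\<exists>N. \<forall>n\<ge>N. norm (norm (f $ n * z ^ n)) \<le> \<bar>f $ n\<bar> * R ^ n"
    by (intro exI[of _ 0] allI impI) (simp add: abs_mult power_abs mult_left_mono)
qed

lemma sums_eval_fps: "(\<lambda>n. f $ n * z ^ n) sums eval_fps f z"
  unfolding eval_fps_def by (rule summable_sums[OF summable_norm_cancel[OF summable_norm_fps_terms]])

lemma abs_eval_fps_le:
  assumes "\<And>N. fps_abs_psum R N f \<le> B"
  shows "\<bar>eval_fps f z\<bar> \<le> B"
proof -
  have "\<bar>eval_fps f z\<bar> \<le> (\<Sum>n. norm (f $ n * z ^ n))"
    unfolding eval_fps_def using summable_norm[OF summable_norm_fps_terms] by simp
  also have "\<dots> \<le> B"
  proof (rule suminf_le_const[OF summable_norm_fps_terms])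
    fix N
    have "\<bar>z\<bar> ^ n \<le> R ^ n" for n using z by (intro power_mono) auto
    then have "(\<Sum>n<N. norm (f $ n * z ^ n)) \<le> fps_abs_psum R N f"
      unfolding fps_abs_psum_def by (intro sum_mono) (simp add: abs_mult power_abs mult_left_mono)
    then show "(\<Sum>n<N. norm (f $ n * z ^ n)) \<le> B" using assms order_trans by blast
  qed
  finally show ?thesis .
qed

end

lemma eval_fps_add_abs_summable:
  assumes "fps_abs_summable R f" "fps_abs_summable R g" "\<bar>z\<bar> \<le> R"
  shows "eval_fps (f + g) z = eval_fps f z + eval_fps g z"
  using sums_add[OF sums_eval_fps[of R f z] sums_eval_fps[of R g z]] assms
  by (simp add: eval_fps_def distrib_right sums_iff)

lemma eval_fps_diff_abs_summable:
  assumes "fps_abs_summable R f" "fps_abs_summable R g" "\<bar>z\<bar> \<le> R"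
  shows "eval_fps (f - g) z = eval_fps f z - eval_fps g z"
  using sums_diff[OF sums_eval_fps[of R f z] sums_eval_fps[of R g z]] assms
  by (simp add: eval_fps_def left_diff_distrib sums_iff)

lemma eval_fps_mult_abs_summable:
  assumes f: "fps_abs_summable R f" and g: "fps_abs_summable R g" and z: "\<bar>z\<bar> \<le> R"
  shows "eval_fps (f * g) z = eval_fps f z * eval_fps g z"
proof -
  have "eval_fps f z * eval_fps g z = (\<Sum>k. \<Sum>i\<le>k. f $ i * g $ (k - i) * (z ^ i * z ^ (k - i)))"
    unfolding eval_fps_def
  proof (subst Cauchy_product)
    show "summable (\<lambda>k. norm (f $ k * z ^ k))" "summable (\<lambda>k. norm (g $ k * z ^ k))"
      by (rule summable_norm_fps_terms[OF f z] summable_norm_fps_terms[OF g z])+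
  qed (simp_all add: algebra_simps)
  also have "(\<lambda>k. \<Sum>i\<le>k. f $ i * g $ (k - i) * (z ^ i * z ^ (k - i))) =
      (\<lambda>k. \<Sum>i\<le>k. f $ i * g $ (k - i) * z ^ k)"
    by (intro ext sum.cong refl) (simp add: power_add [symmetric])
  also have "suminf \<dots> = eval_fps (f * g) z"
    by (simp add: eval_fps_def fps_mult_nth atLeast0AtMost sum_distrib_right)
  finally show ?thesis ..
qed

lemma fps_mult_X_minus_const_nth:
  fixes Q Z :: "'a :: comm_ring_1 fps"
  assumes "Q * (fps_X - fps_const z0) = Z"
  shows "Q $ n * z0 ^ Suc n = - (\<Sum>k\<le>n. Z $ k * z0 ^ k)"
proof (induction n)
  case 0
  have Z0: "- (Q $ 0 * z0) = Z $ 0" using arg_cong[OF assms, of "\<lambda>f. f $ 0"] by simp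
  show ?case by (simp flip: Z0)
next
  case (Suc n)
  have "Z $ Suc n = Q $ n - z0 * Q $ Suc n"
    using arg_cong[OF assms, of "\<lambda>f. f $ Suc n"] by (simp add: algebra_simps)
  then have step: "z0 * Q $ Suc n = Q $ n - Z $ Suc n" by (simp add: algebra_simps)
  have "Q $ Suc n * z0 ^ Suc (Suc n) = z0 ^ Suc n * (z0 * Q $ Suc n)"
    by (simp add: mult_ac)
  also have "\<dots> = z0 ^ Suc n * (Q $ n - Z $ Suc n)" by (subst step) (rule refl)
  also have "\<dots> = Q $ n * z0 ^ Suc n - Z $ Suc n * z0 ^ Suc n"
    by (simp add: algebra_simps)
  finally show ?case using Suc.IH by simp
qed

lemma power_mult_divide_power_le:
  fixes x R :: real
  assumes "0 < x" "x \<le> R" "m \<le> k"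
  shows "x ^ k * (R / x) ^ m \<le> R ^ k"
proof -
  have "(R / x) ^ m \<le> (R / x) ^ k"
    using assms by (intro power_increasing) auto
  then have "x ^ k * (R / x) ^ m \<le> x ^ k * (R / x) ^ k"
    using assms by (intro mult_left_mono) auto
  also have "\<dots> = R ^ k" using assms by (simp add: power_divide)
  finally show ?thesis .
qed

text \<open>Q_n z0^(n+1) is the tail beyond n of the series of Z at its root z0.\<close>
lemma fps_root_quotient_coeff_le:
  assumes Z: "fps_abs_summable R Z" and z0: "z0 \<noteq> 0" "\<bar>z0\<bar> \<le> R"
    and root: "eval_fps Z z0 = 0" and Q: "Q * (fps_X - fps_const z0) = Z"
  shows "\<bar>Q $ n\<bar> * R ^ Suc n \<le> (\<Sum>j. \<bar>Z $ (j + Suc n)\<bar> * R ^ (j + Suc n))"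
proof -
  let ?c = "(R / \<bar>z0\<bar>) ^ Suc n" and ?a = "\<lambda>j. \<bar>Z $ (j + Suc n) * z0 ^ (j + Suc n)\<bar>"
  have a: "summable ?a"
    using summable_ignore_initial_segment[OF summable_norm_fps_terms[OF Z z0(2)], of "Suc n"]
    by (simp only: real_norm_def)
  have tail: "Q $ n * z0 ^ Suc n = (\<Sum>j. Z $ (j + Suc n) * z0 ^ (j + Suc n))"
    using sums_split_initial_segment[OF sums_eval_fps[OF Z z0(2)], of "Suc n"]
      fps_mult_X_minus_const_nth[OF Q, of n] root
    by (simp add: sums_iff lessThan_Suc_atMost)
  have "\<bar>Q $ n\<bar> * R ^ Suc n = \<bar>Q $ n * z0 ^ Suc n\<bar> * ?c"
    using z0 by (simp add: abs_mult power_abs power_divide)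
  also have "\<dots> = \<bar>\<Sum>j. Z $ (j + Suc n) * z0 ^ (j + Suc n)\<bar> * ?c"
    by (simp only: tail)
  also have "\<dots> \<le> (\<Sum>j. ?a j) * ?c"
    using z0 by (intro mult_right_mono summable_rabs[OF a]) auto
  also have "\<dots> = (\<Sum>j. ?a j * ?c)"
    by (rule suminf_mult2[OF a])
  also have "\<dots> \<le> (\<Sum>j. \<bar>Z $ (j + Suc n)\<bar> * R ^ (j + Suc n))"
  proof (rule suminf_le[OF _ summable_mult2[OF a]])
    fix j
    have "\<bar>z0\<bar> ^ (j + Suc n) * ?c \<le> R ^ (j + Suc n)"
      using z0 by (intro power_mult_divide_power_le) auto
    then show "?a j * ?c \<le> \<bar>Z $ (j + Suc n)\<bar> * R ^ (j + Suc n)"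
      by (simp add: abs_mult power_abs mult.assoc mult_left_mono del: power_Suc)
  next
    show "summable (\<lambda>j. \<bar>Z $ (j + Suc n)\<bar> * R ^ (j + Suc n))"
      using summable_ignore_initial_segment[OF Z[unfolded fps_abs_summable_def]] .
  qed
  finally show ?thesis .
qed

lemma coeffs_tendsto_zero_of_root:
  assumes Z: "fps_abs_summable R Z" and z0: "z0 \<noteq> 0" "\<bar>z0\<bar> \<le> R"
    and root: "eval_fps Z z0 = 0" and Q: "Q * (fps_X - fps_const z0) = Z"
  shows "(\<lambda>n. Q $ n * R ^ n) \<longlonglongrightarrow> 0"
proof -
  let ?g = "\<lambda>k. \<bar>Z $ k\<bar> * R ^ k"
  have R: "R > 0" using z0 by linarith
  have "(\<lambda>n. (\<Sum>j. ?g (j + Suc n)) / R) \<longlonglongrightarrow> 0"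
    using Z unfolding fps_abs_summable_def
    by (intro tendsto_divide_zero LIMSEQ_Suc[OF suminf_exist_split2])
  moreover have "\<forall>\<^sub>F n in sequentially. norm (Q $ n * R ^ n) \<le> (\<Sum>j. ?g (j + Suc n)) / R"
    using fps_root_quotient_coeff_le[OF assms] R
    by (intro always_eventually allI) (simp add: abs_mult pos_le_divide_eq mult_ac)
  ultimately show ?thesis
    by (rule Lim_null_comparison[rotated])
qed

lemma coeffs_tendsto_zero_of_two_roots:
  assumes Z: "fps_abs_summable R Z"
    and a: "a \<noteq> 0" "\<bar>a\<bar> \<le> R" "eval_fps Z a = 0"
    and b: "b \<noteq> 0" "\<bar>b\<bar> \<le> R" "eval_fps Z b = 0"
    and "a \<noteq> b" and W: "W * ((fps_X - fps_const a) * (fps_X - fps_const b)) = Z"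
  shows "(\<lambda>n. W $ n * R ^ n) \<longlonglongrightarrow> 0"
proof -
  have "(\<lambda>n. (W * (fps_X - fps_const b)) $ n * R ^ n) \<longlonglongrightarrow> 0"
    using W by (intro coeffs_tendsto_zero_of_root[OF Z a]) (simp add: mult_ac)
  moreover have "(\<lambda>n. (W * (fps_X - fps_const a)) $ n * R ^ n) \<longlonglongrightarrow> 0"
    using W by (intro coeffs_tendsto_zero_of_root[OF Z b]) (simp add: mult_ac)
  ultimately have "(\<lambda>n. ((W * (fps_X - fps_const b)) $ n * R ^ n
      - (W * (fps_X - fps_const a)) $ n * R ^ n) / (a - b)) \<longlonglongrightarrow> 0"
    by (intro tendsto_divide_zero) (auto intro: tendsto_diff[where b = 0, simplified])
  moreover have "(W * (fps_X - fps_const b)) $ n - (W * (fps_X - fps_const a)) $ n = (a - b) * W $ n"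
    for n by (simp add: algebra_simps)
  ultimately show ?thesis
    using \<open>a \<noteq> b\<close> by (simp add: left_diff_distrib[symmetric])
qed

lemma fps_mult_power_nth_eq_0:
  fixes g :: "'a :: comm_ring_1 fps"
  assumes "g $ 0 = 0" "n < k"
  shows "(f * g ^ k) $ n = 0"
proof -
  have "(g ^ k) $ m = 0" if "m < k" for m
    using that
  proof (induction k arbitrary: m)
    case (Suc k)
    have "g $ i * (g ^ k) $ (m - i) = 0" if "i \<le> m" for i
      using Suc that assms(1) by (cases i) auto
    then show ?case by (simp add: fps_mult_nth)
  qed simp
  then show ?thesis using assms(2) by (simp add: fps_mult_nth)
qed

section \<open>The birth-death chain and its generating functions\<close>

lemma infsum_mult_trans:
  fixes \<phi> :: "nat \<Rightarrow> real"
  shows "(\<Sum>\<^sub>\<infinity>x\<in>UNIV. \<phi> x * trans p q r x y) =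
    (if y = 0 then q * \<phi> 1
     else if y = 1 then \<phi> 0 + r * \<phi> 1 + q * \<phi> 2
     else p * \<phi> (y - 1) + r * \<phi> y + q * \<phi> (y + 1))"
proof -
  consider "y = 0" | "y = 1" | k where "y = Suc (Suc k)" by (metis One_nat_def not0_implies_Suc)
  then show ?thesis
  proof cases
    case 1
    have "(\<Sum>\<^sub>\<infinity>x\<in>UNIV. \<phi> x * trans p q r x y) = (\<Sum>\<^sub>\<infinity>x\<in>{1}. \<phi> x * trans p q r x y)"
      by (rule infsum_cong_neutral) (auto simp: trans_def 1)
    then show ?thesis by (simp add: trans_def 1)
  next
    case 2
    have "(\<Sum>\<^sub>\<infinity>x\<in>UNIV. \<phi> x * trans p q r x y) = (\<Sum>\<^sub>\<infinity>x\<in>{0,1,2}. \<phi> x * trans p q r x y)"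
      by (rule infsum_cong_neutral) (auto simp: trans_def 2)
    then show ?thesis by (simp add: trans_def 2)
  next
    case (3 k)
    have "(\<Sum>\<^sub>\<infinity>x\<in>UNIV. \<phi> x * trans p q r x y) = (\<Sum>\<^sub>\<infinity>x\<in>{y-1, y, y+1}. \<phi> x * trans p q r x y)"
      by (rule infsum_cong_neutral) (auto simp: trans_def)
    then show ?thesis by (simp add: trans_def 3 algebra_simps)
  qed
qed

locale birth_death_chain =
  fixes p q r :: real
  assumes p_pos: "p > 0" and q_pos: "q > 0" and r_pos: "r > 0"
    and pqr_sum: "p + q + r = 1" and p_less_q: "p < q"
begin

text \<open>Coefficients of the generating function of the first passage time from 1 to 0: the chain
  steps down, or holds and then passes, or steps up and then needs two successive passages.\<close>
fun passage_coeff :: "nat \<Rightarrow> real" where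
  "passage_coeff 0 = 0"
| "passage_coeff (Suc n) = (if n = 0 then q else 0) + r * passage_coeff n
     + p * (\<Sum>i=0..n. passage_coeff i * passage_coeff (n - i))"

definition G :: "real fps" where
  "G = Abs_fps passage_coeff"

text \<open>A return to 0 is a step to 1 followed by a passage back.\<close>
definition U :: "real fps" where
  "U = inverse (1 - fps_X * G)"

lemma G_nth_0 [simp]: "G $ 0 = 0"
  by (simp add: G_def)

lemma G_eq: "G = fps_X * (fps_const q + fps_const r * G + fps_const p * G ^ 2)"
proof (rule fps_ext)
  fix n
  show "G $ n = (fps_X * (fps_const q + fps_const r * G + fps_const p * G ^ 2)) $ n"
    unfolding G_def
    by (cases n) (auto simp: power2_eq_square fps_mult_nth[of "Abs_fps passage_coeff" "Abs_fps passage_coeff"])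
qed

lemma U_mult: "U * (1 - fps_X * G) = 1"
  unfolding U_def by (rule inverse_mult_eq_1) simp

lemma U_nth_Suc: "U $ Suc t = (U * G) $ t"
proof -
  have "U = 1 + fps_X * (U * G)" using U_mult by (simp add: algebra_simps)
  then show ?thesis by (metis fps_X_mult_nth nat.distinct(1) add_0 diff_Suc_1 fps_add_nth fps_one_nth)
qed

lemma U_nth_0: "U $ 0 = 1"
  by (simp add: U_def fps_inverse_def)

lemma U_G_power_nth_Suc:
  "(U * G ^ Suc k) $ Suc t =
     q * (U * G ^ k) $ t + r * (U * G ^ Suc k) $ t + p * (U * G ^ Suc (Suc k)) $ t"
proof -
  have "U * G ^ Suc k = U * G ^ k * G" by (simp add: algebra_simps)
  also have "\<dots> = fps_X * (fps_const q * (U * G ^ k) + fps_const r * (U * G ^ Suc k)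
      + fps_const p * (U * G ^ Suc (Suc k)))"
    using arg_cong[where f = "\<lambda>x. U * G ^ k * x", OF G_eq]
    by (simp add: algebra_simps power2_eq_square)
  finally have eq: "U * G ^ Suc k = fps_X * (fps_const q * (U * G ^ k) + fps_const r * (U * G ^ Suc k)
      + fps_const p * (U * G ^ Suc (Suc k)))" .
  show ?thesis by (subst eq) (simp del: power_Suc)
qed

text \<open>Reversibility gives mu_t(y) = pi_y P_y(X_t = 0), and U G^y generates P_y(X_t = 0): pass
  from y down to 0, then return to 0 any number of times.\<close>
lemma mu_eq_coeff: "mu p q r t y = piw p q y * (U * G ^ y) $ t"
proof (induction t arbitrary: y)
  case 0
  then show ?case by (simp add: piw_def U_nth_0 fps_mult_nth)
next
  case (Suc t)
  have rec: "mu p q r (Suc t) y =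
    (if y = 0 then q * mu p q r t 1
     else if y = 1 then mu p q r t 0 + r * mu p q r t 1 + q * mu p q r t 2
     else p * mu p q r t (y - 1) + r * mu p q r t y + q * mu p q r t (y + 1))"
    by (simp add: infsum_mult_trans)
  consider "y = 0" | "y = 1" | k where "y = Suc (Suc k)" by (metis One_nat_def not0_implies_Suc)
  then show ?case
  proof cases
    case 1
    then show ?thesis using rec q_pos by (simp add: Suc U_nth_Suc piw_def del: mu.simps)
  next
    case 2
    then show ?thesis
      using rec q_pos U_G_power_nth_Suc[of 0 t]
      by (simp add: Suc piw_def field_simps power2_eq_square del: mu.simps)
  next
    case (3 k)
    define A B C where "A = (U * G ^ Suc k) $ t" and "B = (U * G ^ y) $ t"
      and "C = (U * G ^ Suc y) $ t"
    have w: "piw p q y * q = p * piw p q (Suc k)" "piw p q y * p = q * piw p q (Suc y)"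
      using 3 p_pos q_pos by (simp_all add: piw_def field_simps)
    have "mu p q r (Suc t) y = p * mu p q r t (Suc k) + r * mu p q r t y + q * mu p q r t (Suc y)"
      using rec 3 by (simp del: mu.simps)
    also have "\<dots> = p * (piw p q (Suc k) * A) + r * (piw p q y * B) + q * (piw p q (Suc y) * C)"
      by (simp only: Suc.IH A_def B_def C_def)
    also have "\<dots> = (piw p q y * q) * A + r * (piw p q y * B) + (piw p q y * p) * C"
      by (simp only: w mult.assoc)
    also have "\<dots> = piw p q y * (q * A + r * B + p * C)"
      by (simp add: algebra_simps)
    also have "\<dots> = piw p q y * (U * G ^ y) $ Suc t"
      using U_G_power_nth_Suc[of "Suc k" t] 3 by (simp add: A_def B_def C_def)
    finally show ?thesis .
  qed
qed

lemma mu_eq_0: "t < y \<Longrightarrow> mu p q r t y = 0"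
  by (simp add: mu_eq_coeff fps_mult_power_nth_eq_0)

definition rho :: real where
  "rho = r + 2 * sqrt (p * q)"

definition radius :: real where
  "radius = 1 / rho"

text \<open>The value of G at its radius of convergence 1/rho, where y = (q + r y + p y^2) / rho has a
  double root.\<close>
definition G_at_radius :: real where
  "G_at_radius = sqrt (q / p)"

lemma rho_pos: "rho > 0"
  using r_pos p_pos q_pos by (simp add: rho_def add_pos_nonneg)

lemma rho_less_1: "rho < 1"
proof -
  have "0 < (q - p) ^ 2" using p_less_q by simp
  then have "4 * (p * q) < (p + q) ^ 2" by (simp add: power2_eq_square algebra_simps)
  then have "sqrt (4 * (p * q)) < p + q"
    using p_pos q_pos by (intro real_less_lsqrt) auto
  then show ?thesis using pqr_sum by (simp add: rho_def real_sqrt_mult)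
qed

lemma radius_pos: "radius > 0"
  using rho_pos by (simp add: radius_def)

lemma radius_nonneg: "radius \<ge> 0"
  using radius_pos by simp

lemma one_less_radius: "1 < radius"
  using rho_pos rho_less_1 by (simp add: radius_def)

lemma G_at_radius_square: "G_at_radius ^ 2 = q / p"
  using p_pos q_pos by (simp add: G_at_radius_def)

lemma one_less_G_at_radius: "1 < G_at_radius"
  using p_pos p_less_q by (simp add: G_at_radius_def)

lemma G_at_radius_less: "G_at_radius < q / p"
proof -
  have "G_at_radius * 1 < G_at_radius * G_at_radius"
    using one_less_G_at_radius by (intro mult_strict_left_mono) auto
  then show ?thesis using G_at_radius_square by (simp add: power2_eq_square)
qed

lemma radius_G_at_radius_fixpoint: "radius * (q + r * G_at_radius + p * G_at_radius ^ 2) = G_at_radius"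
proof -
  have "G_at_radius * sqrt (p * q) = sqrt (q / p * (p * q))"
    by (simp only: G_at_radius_def real_sqrt_mult)
  also have "q / p * (p * q) = q ^ 2" using p_pos by (simp add: power2_eq_square)
  finally have "G_at_radius * sqrt (p * q) = q" using q_pos by simp
  then have "q + r * G_at_radius + p * G_at_radius ^ 2 = G_at_radius * rho"
    using G_at_radius_square p_pos by (simp add: rho_def algebra_simps)
  then show ?thesis using rho_pos by (simp add: radius_def)
qed

lemma G_abs_psum_le: "fps_abs_psum radius N G \<le> G_at_radius"
proof (induction N)
  case 0
  then show ?case using one_less_G_at_radius by (simp add: fps_abs_psum_def)
next
  case (Suc N)
  let ?S = "fps_abs_psum radius N"
  have "?S (fps_const q + fps_const r * G + fps_const p * G ^ 2)
      \<le> ?S (fps_const q + fps_const r * G) + ?S (fps_const p * G ^ 2)"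
    by (rule fps_abs_psum_add[OF radius_nonneg])
  also have "\<dots> \<le> ?S (fps_const q) + ?S (fps_const r * G) + ?S (fps_const p * G ^ 2)"
    by (intro add_right_mono fps_abs_psum_add[OF radius_nonneg])
  also have "\<dots> \<le> q + r * ?S G + p * ?S G ^ 2"
    using fps_abs_psum_const[of radius N q] fps_abs_psum_mult[OF radius_nonneg, of N G G] p_pos q_pos r_pos
    by (intro add_mono) (auto simp: power2_eq_square)
  also have "\<dots> \<le> q + r * G_at_radius + p * G_at_radius ^ 2"
    using Suc.IH fps_abs_psum_nonneg[OF radius_nonneg] p_pos r_pos
    by (intro add_mono mult_left_mono power_mono order.refl) auto
  finally have "radius * ?S (fps_const q + fps_const r * G + fps_const p * G ^ 2)
      \<le> radius * (q + r * G_at_radius + p * G_at_radius ^ 2)"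
    using radius_nonneg by (rule mult_left_mono)
  then show ?case
    by (subst G_eq) (simp only: fps_abs_psum_X_mult radius_G_at_radius_fixpoint)
qed

lemma G_abs_summable: "fps_abs_summable radius G"
  using radius_pos G_abs_psum_le by (intro fps_abs_summableI) auto

lemma abs_eval_G_le: "\<bar>z\<bar> \<le> radius \<Longrightarrow> \<bar>eval_fps G z\<bar> \<le> G_at_radius"
  using abs_eval_fps_le[OF G_abs_summable _ G_abs_psum_le] by blast

lemma eval_G_eq:
  assumes z: "\<bar>z\<bar> \<le> radius"
  shows "eval_fps G z = z * (q + r * eval_fps G z + p * eval_fps G z ^ 2)"
proof -
  note intros = fps_abs_summable_intros[OF radius_nonneg] G_abs_summable
  have "eval_fps G z = eval_fps (fps_X * (fps_const q + fps_const r * G + fps_const p * (G * G))) z"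
    by (subst G_eq) (simp add: power2_eq_square)
  also have "\<dots> = z * (q + r * eval_fps G z + p * (eval_fps G z * eval_fps G z))"
    using z by (simp add: eval_fps_mult_abs_summable[OF _ _ z] eval_fps_add_abs_summable[OF _ _ z] intros)
  finally show ?thesis by (simp add: power2_eq_square)
qed

text \<open>Of the two fixed points 1 and q/p, the bound by G_at_radius < q/p selects 1.\<close>
lemma eval_G_1: "eval_fps G 1 = 1"
proof -
  define y where "y = eval_fps G 1"
  have "y = q + r * y + p * y ^ 2"
    using eval_G_eq[of 1] one_less_radius by (simp add: y_def)
  moreover have "r = 1 - p - q" using pqr_sum by simp
  ultimately have "(y - 1) * (p * y - q) = 0"
    by (simp add: algebra_simps power2_eq_square)
  moreover have "p * y < q"
  proof -
    have "y \<le> G_at_radius" using abs_eval_G_le[of 1] one_less_radius by (simp add: y_def)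
    then have "p * y \<le> p * G_at_radius" using p_pos by simp
    also have "\<dots> < q" using G_at_radius_less p_pos by (simp add: field_simps)
    finally show ?thesis .
  qed
  ultimately show ?thesis by (simp add: y_def)
qed

definition inv_qpG :: "real fps" where
  "inv_qpG = fps_const (1 / q) * inverse (1 + fps_const (p / q) * G)"

lemma inv_qpG_mult: "inv_qpG * (fps_const q + fps_const p * G) = 1"
proof -
  have "fps_const q + fps_const p * G = fps_const q * (1 + fps_const (p / q) * G)"
    using q_pos by (simp add: algebra_simps flip: fps_const_mult)
  moreover have "inverse (1 + fps_const (p / q) * G) * (1 + fps_const (p / q) * G) = 1"
    by (rule inverse_mult_eq_1) simp
  ultimately show ?thesis
    using q_pos by (simp add: inv_qpG_def mult_ac flip: fps_const_mult)
qed

lemma inv_qpG_abs_summable: "fps_abs_summable radius inv_qpG"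
proof -
  have "p / q * G_at_radius < 1"
    using G_at_radius_less p_pos q_pos by (simp add: field_simps)
  moreover have "fps_abs_psum radius N (fps_const (- (p / q)) * G) \<le> p / q * G_at_radius" for N
    using G_abs_psum_le p_pos q_pos by (simp add: mult_left_mono divide_right_mono)
  ultimately have "fps_abs_summable radius (inverse (1 - fps_const (- (p / q)) * G))"
    by (intro fps_abs_summable_inverse[OF radius_nonneg]) auto
  moreover have "1 - fps_const (- (p / q)) * G = 1 + fps_const (p / q) * G"
    by (simp flip: fps_const_neg)
  ultimately show ?thesis
    unfolding inv_qpG_def by (intro fps_abs_summable_mult[OF radius_nonneg] fps_abs_summable_const[OF radius_nonneg]) simp
qed

text \<open>The series of (-1)^x pi_x G^x over x, summed as a geometric series.\<close>
definition V :: "real fps" where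
  "V = (fps_const q - fps_const (q + r) * G) * inv_qpG"

definition alt_weight :: "nat \<Rightarrow> real" where
  "alt_weight x = (-1) ^ x * piw p q x"

lemma alt_weight_partial_sum:
  assumes "N \<ge> 1"
  shows "(\<Sum>x\<le>N. fps_const (alt_weight x) * G ^ x) * (fps_const q + fps_const p * G)
    = fps_const q - fps_const (q + r) * G + fps_const (p * alt_weight N) * G ^ Suc N"
  using assms
proof (induction N rule: dec_induct)
  case base
  define Ci where "Ci = fps_const (1 / q)"
  have inv: "fps_const q * Ci = 1"
    using q_pos by (simp add: Ci_def)
  have "q + r = 1 - p" using pqr_sum by simp
  then have qr: "fps_const (q + r) = 1 - fps_const p"
    by (metis fps_const_1_eq_1 fps_const_sub)
  have c1: "fps_const (p * alt_weight 1) = - (fps_const p * Ci)"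
    by (simp add: alt_weight_def piw_def Ci_def)
  have sum: "(\<Sum>x\<le>1. fps_const (alt_weight x) * G ^ x) = 1 - Ci * G"
    by (simp add: alt_weight_def piw_def Ci_def flip: fps_const_neg)
  have expand: "(1 - Ci * G) * (fps_const q + fps_const p * G)
      = fps_const q - (1 - fps_const p) * G - fps_const p * Ci * G ^ 2 + (1 - fps_const q * Ci) * G"
    by (simp add: algebra_simps power2_eq_square)
  show ?case
    unfolding sum qr c1 expand inv by (simp add: power2_eq_square)
next
  case (step N)
  let ?Q = "fps_const q + fps_const p * G" and ?A = "fps_const q - fps_const (q + r) * G"
  define a c where "a = fps_const (p * alt_weight N)" and "c = fps_const (alt_weight (Suc N))"
  have "alt_weight N * p + alt_weight (Suc N) * q = 0"
    using step(1) p_pos q_pos by (cases N) (simp_all add: alt_weight_def piw_def field_simps)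
  then have cancel: "a + fps_const q * c = 0"
    by (simp add: a_def c_def flip: fps_const_add fps_const_mult)
  have "(\<Sum>x\<le>Suc N. fps_const (alt_weight x) * G ^ x) * ?Q
      = (\<Sum>x\<le>N. fps_const (alt_weight x) * G ^ x) * ?Q + c * G ^ Suc N * ?Q"
    by (simp only: sum.atMost_Suc distrib_right c_def)
  also have "\<dots> = ?A + (a + fps_const q * c) * G ^ Suc N + fps_const p * c * G ^ Suc (Suc N)"
    unfolding step(3)[folded a_def] by (simp add: algebra_simps)
  also have "\<dots> = ?A + fps_const (p * alt_weight (Suc N)) * G ^ Suc (Suc N)"
    unfolding cancel by (simp add: c_def)
  finally show ?case .
qed

lemma U_V_nth_eq_sum:
  assumes "1 \<le> N" "t \<le> N"
  shows "(U * V) $ t = (\<Sum>x\<le>N. alt_weight x * (U * G ^ x) $ t)"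
proof -
  let ?K = "\<Sum>x\<le>N. fps_const (alt_weight x) * G ^ x"
  have "U * ?K = U * ?K * (inv_qpG * (fps_const q + fps_const p * G))"
    using inv_qpG_mult by simp
  also have "\<dots> = U * (?K * (fps_const q + fps_const p * G)) * inv_qpG"
    by (simp add: mult_ac)
  also have "\<dots> = U * (fps_const q - fps_const (q + r) * G
      + fps_const (p * alt_weight N) * G ^ Suc N) * inv_qpG"
    by (simp only: alt_weight_partial_sum[OF assms(1)])
  also have "\<dots> = U * V + (U * inv_qpG * fps_const (p * alt_weight N)) * G ^ Suc N"
    by (simp add: V_def algebra_simps)
  finally have eq: "U * ?K = U * V + (U * inv_qpG * fps_const (p * alt_weight N)) * G ^ Suc N" .
  have "((U * inv_qpG * fps_const (p * alt_weight N)) * G ^ Suc N) $ t = 0"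
    using assms(2) by (intro fps_mult_power_nth_eq_0) auto
  then have "(U * V) $ t = (U * ?K) $ t"
    unfolding eq fps_add_nth by simp
  also have "\<dots> = (\<Sum>x\<le>N. alt_weight x * (U * G ^ x) $ t)"
    by (simp add: sum_distrib_left fps_sum_nth mult.left_commute[of U])
  finally show ?thesis .
qed

lemma sums_alternating_mu: "(\<lambda>x. (-1) ^ x * mu p q r t x) sums ((U * V) $ t)"
proof -
  have "(\<lambda>x. (-1) ^ x * mu p q r t x) sums (\<Sum>x\<le>Suc t. (-1) ^ x * mu p q r t x)"
    by (rule sums_finite) (auto simp: mu_eq_0)
  also have "(\<Sum>x\<le>Suc t. (-1) ^ x * mu p q r t x) = (U * V) $ t"
    by (simp add: U_V_nth_eq_sum[of "Suc t" t] mu_eq_coeff alt_weight_def mult.assoc)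
  finally show ?thesis .
qed

section \<open>Partial fractions of the alternating sums\<close>

definition lam :: real where
  "lam = q / (q + r)"

lemma lam_pos: "lam > 0"
  using q_pos r_pos by (simp add: lam_def)

definition U_numer :: "real fps" where
  "U_numer = fps_const r * fps_X + fps_const p * fps_X * G - fps_const (q + r)"

definition U_denom :: "real fps" where
  "U_denom = (fps_X - 1) * (fps_const q * fps_X + fps_const (q + r))"

lemma U_mult_denom: "U * U_denom = U_numer"
proof -
  define Cp Cq Cr where "Cp = fps_const p" and "Cq = fps_const q" and "Cr = fps_const r"
  have "Cp + Cq + Cr = 1"
    using pqr_sum by (simp add: Cp_def Cq_def Cr_def)
  moreover have "G = fps_X * (Cq + Cr * G + Cp * G ^ 2)"
    using G_eq by (simp add: Cp_def Cq_def Cr_def)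
  moreover have "fps_const (q + r) = Cq + Cr"
    by (simp add: Cq_def Cr_def)
  ultimately have "(1 - fps_X * G) * U_numer = U_denom"
    unfolding U_numer_def U_denom_def Cp_def[symmetric] Cq_def[symmetric] Cr_def[symmetric]
    by algebra
  then show ?thesis
    using U_mult by (metis mult.assoc mult.commute mult_1)
qed

text \<open>stat_alt_sum / (1 - z) and alpha / (1 + lam z) are the principal parts of U V at its two
  poles 1 and -1/lam inside the disc of radius 1/rho; W is what remains.\<close>
definition stat_alt_sum :: real where
  "stat_alt_sum = - (q - p) * r / ((p + q) * (1 + q - p))"

definition alpha :: real where
  "alpha = 2 * (((1 + q - p) * (q + r) - q) / ((1 + q - p) * (1 - 2 * p)))"

definition W :: "real fps" where
  "W = U * V - fps_const stat_alt_sum * Abs_fps (\<lambda>_. 1) - fps_const alpha * Abs_fps (\<lambda>n. (- lam) ^ n)"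

definition W_numer :: "real fps" where
  "W_numer = U_numer * V + fps_const stat_alt_sum * (fps_const q * fps_X + fps_const (q + r))
     - fps_const (alpha * (q + r)) * (fps_X - 1)"

lemma U_V_nth_decomposition: "(U * V) $ n = stat_alt_sum + alpha * (- lam) ^ n + W $ n"
  by (simp add: W_def)

lemma W_mult_denom: "W * U_denom = W_numer"
proof -
  define E1 E2 where "E1 = Abs_fps (\<lambda>_. 1 :: real)" and "E2 = Abs_fps (\<lambda>n. (- lam) ^ n)"
  have "E1 * (fps_X - 1) = - 1"
    unfolding E1_def by (rule fps_ext) (simp add: algebra_simps)
  moreover have "E2 * (1 + fps_const lam * fps_X) = 1"
  proof (rule fps_ext)
    fix n
    show "(E2 * (1 + fps_const lam * fps_X)) $ n = 1 $ n"
      unfolding E2_def by (cases n) (simp_all add: algebra_simps)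
  qed
  moreover have "fps_const q * fps_X + fps_const (q + r) = fps_const (q + r) * (1 + fps_const lam * fps_X)"
  proof -
    have "fps_const (q + r) * fps_const lam = fps_const q"
      using q_pos r_pos by (simp add: lam_def)
    then show ?thesis by (simp add: distrib_left mult.assoc[symmetric] add.commute)
  qed
  moreover have "fps_const (alpha * (q + r)) = fps_const alpha * fps_const (q + r)"
    by simp
  ultimately show ?thesis
    using U_mult_denom unfolding W_def W_numer_def U_denom_def E1_def[symmetric] E2_def[symmetric]
    by algebra
qed

lemma U_denom_factor:
  "U_denom = fps_const q * ((fps_X - fps_const 1) * (fps_X - fps_const (- (1 / lam))))"
proof -
  have "q * (1 / lam) = q + r" using q_pos r_pos by (simp add: lam_def)
  then have "fps_const q * (fps_X - fps_const (- (1 / lam))) = fps_const q * fps_X + fps_const (q + r)"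
    by (simp add: algebra_simps flip: fps_const_neg fps_const_mult)
  then show ?thesis unfolding U_denom_def by (simp add: mult_ac)
qed

lemma W_numer_abs_summable: "fps_abs_summable radius W_numer"
  unfolding W_numer_def U_numer_def V_def
  by (intro fps_abs_summable_intros[OF radius_nonneg] G_abs_summable inv_qpG_abs_summable)

context
  fixes z :: real
  assumes z: "\<bar>z\<bar> \<le> radius"
begin

private lemmas eval_simps = eval_fps_mult_abs_summable[OF _ _ z] eval_fps_add_abs_summable[OF _ _ z]
  eval_fps_diff_abs_summable[OF _ _ z] fps_abs_summable_intros[OF radius_nonneg]
  G_abs_summable inv_qpG_abs_summable

lemma eval_inv_qpG: "eval_fps inv_qpG z * (q + p * eval_fps G z) = 1"
  using arg_cong[where f = "\<lambda>f. eval_fps f z", OF inv_qpG_mult] by (simp add: eval_simps)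

lemma eval_W_numer: "eval_fps W_numer z =
    (r * z + p * z * eval_fps G z - (q + r)) * ((q - (q + r) * eval_fps G z) * eval_fps inv_qpG z)
    + stat_alt_sum * (q * z + (q + r)) - alpha * (q + r) * (z - 1)"
  unfolding W_numer_def U_numer_def V_def by (simp add: eval_simps mult.assoc)

end

lemma eval_W_numer_1: "eval_fps W_numer 1 = 0"
proof -
  have z: "\<bar>1\<bar> \<le> radius" using one_less_radius by simp
  have j: "eval_fps inv_qpG 1 = 1 / (q + p)"
    using eval_inv_qpG[OF z] eval_G_1 p_pos q_pos by (simp add: field_simps)
  have e: "q + (q + r) = 1 + q - p" using pqr_sum by simp
  have "1 + q - p > 0" using p_less_q by simp
  then have c: "stat_alt_sum * (q + (q + r)) = - (q - p) * r / (p + q)"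
    unfolding e stat_alt_sum_def
    using nonzero_mult_divide_mult_cancel_right[of "1 + q - p" "- (q - p) * r" "p + q"] by simp
  have "eval_fps W_numer 1
      = (r + p - (q + r)) * ((q - (q + r)) * (1 / (q + p))) + stat_alt_sum * (q + (q + r))"
    by (simp add: eval_W_numer[OF z] eval_G_1 j)
  also have "\<dots> = 0"
    unfolding c using p_pos q_pos by (simp add: field_simps)
  finally show ?thesis .
qed

section \<open>Total variation\<close>

lemma sums_piw: "piw p q sums (1 / (q - p) + 1)"
proof -
  have "(\<lambda>n. (p / q) ^ n) sums (1 / (1 - p / q))"
    using p_pos p_less_q by (intro geometric_sums) simp
  then have "(\<lambda>n. (1 / q) * (p / q) ^ n) sums ((1 / q) * (1 / (1 - p / q)))"
    by (rule sums_mult)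
  moreover have "(1 / q) * (1 / (1 - p / q)) = 1 / (q - p)"
    using q_pos p_less_q by (simp add: field_simps)
  ultimately have "(\<lambda>n. piw p q (Suc n)) sums (1 / (q - p))"
    by (simp add: piw_def power_divide)
  then have "piw p q sums (1 / (q - p) + piw p q 0)"
    by (simp only: sums_Suc_iff)
  then show ?thesis by (simp add: piw_def)
qed

lemma sums_alternating_piw: "(\<lambda>n. (-1) ^ n * piw p q n) sums (1 - 1 / (q + p))"
proof -
  have "(\<lambda>n. (- p / q) ^ n) sums (1 / (1 - - p / q))"
    using p_pos p_less_q by (intro geometric_sums) simp
  then have "(\<lambda>n. (- 1 / q) * (- p / q) ^ n) sums ((- 1 / q) * (1 / (1 - - p / q)))"
    by (rule sums_mult)
  moreover have "(- 1 / q) * (1 / (1 - - p / q)) = - (1 / (q + p))"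
    using p_pos q_pos by (simp add: field_simps)
  moreover have "(- 1 / q) * (- p / q) ^ n = (-1) ^ Suc n * piw p q (Suc n)" for n
  proof -
    have "(- p / q) ^ n = (-1) ^ n * (p ^ n / q ^ n)"
      by (simp add: power_minus[of "p / q"] power_divide)
    then show ?thesis using q_pos by (simp add: piw_def field_simps)
  qed
  ultimately have "(\<lambda>n. (-1) ^ Suc n * piw p q (Suc n)) sums (- (1 / (q + p)))"
    by simp
  then have "(\<lambda>n. (-1) ^ n * piw p q n) sums (- (1 / (q + p)) + (-1) ^ 0 * piw p q 0)"
    by (rule iffD1[OF sums_Suc_iff[where f = "\<lambda>n. (-1) ^ n * piw p q n"]])
  then show ?thesis by (simp add: piw_def)
qed

lemma stat_eq: "stat p q n = piw p q n / (1 / (q - p) + 1)"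
proof -
  have "(piw p q has_sum (1 / (q - p) + 1)) UNIV"
    using sums_piw p_pos q_pos by (intro sums_nonneg_imp_has_sum) (auto simp: piw_def)
  then show ?thesis by (simp add: stat_def infsumI)
qed

lemma stat_nonneg: "stat p q n \<ge> 0"
  using p_pos q_pos p_less_q by (simp add: stat_eq piw_def add_pos_pos)

lemma sums_alternating_stat: "(\<lambda>n. (-1) ^ n * stat p q n) sums stat_alt_sum"
proof -
  have "(\<lambda>n. (-1) ^ n * piw p q n / (1 / (q - p) + 1)) sums ((1 - 1 / (q + p)) / (1 / (q - p) + 1))"
    by (rule sums_divide[OF sums_alternating_piw])
  moreover have "(1 - 1 / (q + p)) / (1 / (q - p) + 1) = stat_alt_sum"
  proof -
    have "1 - 1 / (q + p) = (q + p - 1) / (q + p)"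
      using p_pos q_pos by (simp add: field_simps)
    also have "q + p - 1 = - r" using pqr_sum by simp
    finally have "1 - 1 / (q + p) = - r / (q + p)" .
    moreover have "1 / (q - p) + 1 = (1 + q - p) / (q - p)"
      using p_less_q by (simp add: field_simps)
    ultimately show ?thesis
      unfolding stat_alt_sum_def using p_less_q
      by (simp add: add.commute) (metis minus_divide_left minus_diff_eq mult.commute mult_minus_left)
  qed
  ultimately show ?thesis by (simp add: stat_eq)
qed

lemma tv_dist_ge_alternating: "\<bar>stat_alt_sum - (U * V) $ t\<bar> / 2 \<le> tv_dist (stat p q) (mu p q r t)"
proof -
  let ?d = "\<lambda>n. stat p q n - mu p q r t n"
  have "summable (stat p q)"
    unfolding stat_eq[abs_def] using sums_summable[OF sums_divide[OF sums_piw]] .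
  then have d: "summable (\<lambda>n. \<bar>?d n\<bar>)"
  proof (rule summable_comparison_test_ev[rotated])
    show "\<forall>\<^sub>F n in sequentially. norm \<bar>?d n\<bar> \<le> stat p q n"
      using eventually_gt_at_top[of t]
      by eventually_elim (simp add: mu_eq_0 stat_nonneg)
  qed
  have "((\<lambda>n. \<bar>?d n\<bar>) has_sum (\<Sum>n. \<bar>?d n\<bar>)) UNIV"
    by (rule sums_nonneg_imp_has_sum[OF summable_sums[OF d]]) simp
  then have tv: "tv_dist (stat p q) (mu p q r t) = (\<Sum>n. \<bar>?d n\<bar>) / 2"
    by (simp add: tv_dist_def infsumI)
  have "(\<lambda>n. (-1) ^ n * ?d n) sums (stat_alt_sum - (U * V) $ t)"
    using sums_diff[OF sums_alternating_stat sums_alternating_mu[of t]]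
    by (simp add: right_diff_distrib)
  moreover have "\<bar>\<Sum>n. (-1) ^ n * ?d n\<bar> \<le> (\<Sum>n. \<bar>?d n\<bar>)"
    using summable_rabs[of "\<lambda>n. (-1) ^ n * ?d n"] d by (simp add: abs_mult)
  ultimately show ?thesis unfolding tv by (simp add: sums_iff)
qed

lemma remainder_constant_pos:
  "0 < (p / (q + r)) * (1 + 1 / (sqrt (p * q) - p))
     / ((1 - sqrt (p / q) * (r + (1 + q - p)) / (2 * (q + r)))
        * (1 + sqrt (p / q) * (r - (1 + q - p)) / (2 * (q + r))))"
proof -
  have p_eq: "p = 1 - q - r" using pqr_sum by simp
  have "p = sqrt (p * p)" using p_pos by simp
  also have "\<dots> < sqrt (p * q)" using p_pos p_less_q by (intro real_sqrt_less_mono) simp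
  finally have num: "0 < p / (q + r) * (1 + 1 / (sqrt (p * q) - p))"
    using p_pos q_pos r_pos by (intro mult_pos_pos add_pos_pos) auto
  have "sqrt (p / q) < 1" and "q / (q + r) < 1"
    using p_pos p_less_q r_pos q_pos by auto
  moreover have "sqrt (p / q) * (q / (q + r)) < 1 * 1"
    using p_pos q_pos r_pos calculation by (intro mult_strict_mono) auto
  ultimately have den: "0 < (1 - sqrt (p / q)) * (1 - sqrt (p / q) * (q / (q + r)))"
    by (intro mult_pos_pos) auto
  have "(r + (1 + q - p)) / (2 * (q + r)) = 1" and "(r - (1 + q - p)) / (2 * (q + r)) = - (q / (q + r))"
    using q_pos r_pos by (auto simp: field_simps p_eq)
  then have "sqrt (p / q) * (r + (1 + q - p)) / (2 * (q + r)) = sqrt (p / q)"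
    and "1 + sqrt (p / q) * (r - (1 + q - p)) / (2 * (q + r)) = 1 - sqrt (p / q) * (q / (q + r))"
    by (metis times_divide_eq_right mult_1_right, metis times_divide_eq_right mult_minus_right
        diff_conv_add_uminus)
  then show ?thesis
    using divide_pos_pos[OF num den] by simp
qed

end

locale birth_death_chain_gap = birth_death_chain +
  assumes gap: "q / (q + r) > r + 2 * sqrt (p * q)"
begin

lemma inv_lam_le_radius: "1 / lam \<le> radius"
proof -
  have "rho \<le> lam" using gap by (simp add: lam_def rho_def)
  then show ?thesis
    unfolding radius_def using rho_pos lam_pos by (intro divide_left_mono) auto
qed

lemma eval_G_neg_inv_lam: "eval_fps G (- (1 / lam)) = - lam"
proof -
  define u where "u = 1 / lam"
  define y where "y = eval_fps G (- u)"
  have z: "\<bar>- u\<bar> \<le> radius" using inv_lam_le_radius lam_pos by (simp add: u_def)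
  have lu: "lam * u = 1" using lam_pos by (simp add: u_def)
  have u1: "u > 1" using q_pos r_pos by (simp add: u_def lam_def)
  have qu: "q * u = q + r" using q_pos r_pos by (simp add: u_def lam_def)
  have "q * u ^ 2 = (q * u) * u" by (simp add: power2_eq_square)
  also have "\<dots> = q + r + r * u" using qu by (simp add: algebra_simps)
  finally have key: "p + q * u ^ 2 = 1 + r * u" using pqr_sum by simp
  have eq: "y = - u * (q + r * y + p * y ^ 2)"
    using eval_G_eq[OF z] by (simp add: y_def)
  have "p * u * (y + lam) * (y + q * u / p)
      = p * u * y ^ 2 + (p * u * lam + q * u ^ 2) * y + q * u ^ 2 * lam"
    using p_pos by (simp add: algebra_simps power2_eq_square)
  also have "\<dots> = p * u * y ^ 2 + (p + q * u ^ 2) * y + q * u"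
    using lu by (simp add: algebra_simps power2_eq_square)
  also have "\<dots> = p * u * y ^ 2 + (1 + r * u) * y + q * u" using key by simp
  also have "\<dots> = 0" using eq by (simp add: algebra_simps)
  finally have "(p * u * (y + q * u / p)) * (y + lam) = 0" by (simp add: mult_ac)
  moreover have "y + q * u / p > 0"
  proof -
    have "- y \<le> G_at_radius" using abs_eval_G_le[OF z] by (simp add: y_def)
    also have "\<dots> < q / p" by (rule G_at_radius_less)
    also have "\<dots> < q * u / p" using u1 p_pos q_pos by (simp add: field_simps)
    finally show ?thesis by simp
  qed
  ultimately have "y + lam = 0" using p_pos u1 by simp
  then show ?thesis by (simp add: y_def u_def)
qed

lemma eval_inv_qpG_neg_inv_lam: "eval_fps inv_qpG (- (1 / lam)) = (q + r) / (q * (q + r - p))"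
proof -
  have z: "\<bar>- (1 / lam)\<bar> \<le> radius" using inv_lam_le_radius lam_pos by simp
  have pos: "q + r - p > 0" using p_less_q r_pos by simp
  then have e: "q * (q + r - p) = (q - p * lam) * (q + r)"
    using q_pos r_pos by (simp add: lam_def field_simps)
  have "eval_fps inv_qpG (- (1 / lam)) * (q - p * lam) = 1"
    using eval_inv_qpG[OF z] by (simp add: eval_G_neg_inv_lam)
  then have "eval_fps inv_qpG (- (1 / lam)) * (q * (q + r - p)) = q + r"
    unfolding e by (simp add: mult.assoc[symmetric])
  then show ?thesis using pos q_pos by (simp add: eq_divide_eq)
qed

lemma eval_W_numer_neg_inv_lam: "eval_fps W_numer (- (1 / lam)) = 0"
proof -
  define s where "s = q + r"
  have s_pos: "s > 0" and p_eq: "p = 1 - s" and r_eq: "r = s - q" and sp: "s - p > 0"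
    using q_pos r_pos pqr_sum p_less_q by (auto simp: s_def)
  have h1: "1 + q - p = q + s" and h2: "1 - 2 * p = 2 * s - 1"
    using pqr_sum by (auto simp: s_def)
  have alpha: "alpha = 2 * ((q + s) * s - q) / ((q + s) * (2 * s - 1))"
    unfolding alpha_def s_def[symmetric] h1 h2 by simp
  have lam: "lam = q / s" and inv_lam: "1 / lam = s / q"
    using q_pos by (simp_all add: lam_def s_def)
  have z: "\<bar>- (1 / lam)\<bar> \<le> radius" using inv_lam_le_radius lam_pos by simp
  have j: "eval_fps inv_qpG (- (1 / lam)) = s / (q * (s - p))"
    using eval_inv_qpG_neg_inv_lam by (simp add: s_def)
  have "2 * s - 1 > 0" and "q + s > 0" using sp q_pos s_pos by (auto simp: p_eq)
  have t1: "r * (- (1 / lam)) + p * (- (1 / lam)) * eval_fps G (- (1 / lam)) - (q + r) = p - r * s / q - s"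
  proof -
    have "p * (- (1 / lam)) * (- lam) = p" using lam_pos by simp
    then show ?thesis unfolding eval_G_neg_inv_lam by (simp add: inv_lam s_def)
  qed
  have t2: "(q - (q + r) * eval_fps G (- (1 / lam))) * eval_fps inv_qpG (- (1 / lam)) = 2 * s / (2 * s - 1)"
  proof -
    have "s - p = 2 * s - 1" using p_eq by simp
    then show ?thesis
      unfolding eval_G_neg_inv_lam j unfolding s_def[symmetric] lam
      using q_pos s_pos \<open>2 * s - 1 > 0\<close> by (simp add: field_simps) (simp add: p_eq algebra_simps)
  qed
  have t3: "q * (- (1 / lam)) + (q + r) = 0"
    using q_pos by (simp add: inv_lam s_def)
  have "eval_fps W_numer (- (1 / lam)) = (p - r * s / q - s) * (2 * s / (2 * s - 1)) + alpha * s * (s / q + 1)"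
    unfolding eval_W_numer[OF z] t1 t2 t3 unfolding inv_lam by (simp add: s_def algebra_simps)
  also have "\<dots> = 0"
  proof -
    define K where "K = (q + s) * s - q"
    have f1: "p - r * s / q - s = - K / q"
      unfolding K_def p_eq r_eq using q_pos by (simp add: field_simps)
    have f2: "s / q + 1 = (q + s) / q" using q_pos by (simp add: field_simps)
    have f3: "alpha = 2 * K / ((q + s) * (2 * s - 1))" by (simp add: alpha K_def)
    define D E where "D = 2 * s - 1" and "E = q + s"
    have "D \<noteq> 0" and "E \<noteq> 0" and "q \<noteq> 0"
      using \<open>2 * s - 1 > 0\<close> \<open>q + s > 0\<close> q_pos by (auto simp: D_def E_def)
    then show ?thesis
      unfolding f1 f2 f3 D_def[symmetric] E_def[symmetric] by (simp add: field_simps)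
  qed
  finally show ?thesis .
qed

lemma W_coeffs_tendsto_0: "(\<lambda>n. W $ n * radius ^ n) \<longlonglongrightarrow> 0"
proof -
  have W_eq: "(W * fps_const q) * ((fps_X - fps_const 1) * (fps_X - fps_const (- (1 / lam)))) = W_numer"
    using W_mult_denom by (simp add: U_denom_factor mult_ac)
  have "(\<lambda>n. (W * fps_const q) $ n * radius ^ n) \<longlonglongrightarrow> 0"
  proof (rule coeffs_tendsto_zero_of_two_roots[OF W_numer_abs_summable _ _ eval_W_numer_1 _ _
        eval_W_numer_neg_inv_lam _ W_eq])
    have "0 < 1 / lam" using lam_pos by simp
    then show "(1 :: real) \<noteq> - (1 / lam)" by linarith
  qed (use one_less_radius inv_lam_le_radius lam_pos in auto)
  then have "(\<lambda>n. (W $ n * radius ^ n) * q / q) \<longlonglongrightarrow> 0"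
    by (intro tendsto_divide_zero) (simp add: mult_ac)
  then show ?thesis using q_pos by simp
qed

lemma tv_dist_eventually_ge:
  assumes "B > 0"
  shows "\<forall>\<^sub>F t in sequentially. tv_dist (stat p q) (mu p q r t) \<ge> alpha / 2 * lam ^ t - B * rho ^ t"
proof -
  have "\<forall>\<^sub>F t in sequentially. \<bar>W $ t * radius ^ t\<bar> < 2 * B"
    using W_coeffs_tendsto_0 assms by (simp add: tendsto_iff dist_real_def)
  then show ?thesis
  proof eventually_elim
    case (elim t)
    have "radius ^ t * rho ^ t = 1"
      using rho_pos by (simp add: radius_def flip: power_mult_distrib)
    then have "\<bar>W $ t\<bar> = \<bar>W $ t * radius ^ t\<bar> * rho ^ t"
      using rho_pos radius_pos by (simp add: abs_mult mult.assoc)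
    also have "\<dots> \<le> 2 * B * rho ^ t"
      using elim rho_pos by (intro mult_right_mono) auto
    finally have W: "\<bar>W $ t\<bar> \<le> 2 * B * rho ^ t" .
    have "alpha * lam ^ t \<le> \<bar>alpha * (- lam) ^ t\<bar>"
      using lam_pos by (simp add: abs_mult power_abs)
    then have "alpha * lam ^ t - 2 * B * rho ^ t \<le> \<bar>stat_alt_sum - (U * V) $ t\<bar>"
      using W by (simp add: U_V_nth_decomposition)
    then show ?case using tv_dist_ge_alternating[of t] by simp
  qed
qed

end

theorem mainTheorem2:
  fixes p q r :: real
  assumes "p > 0" and "q > 0" and "r > 0" and "p + q + r = 1" and "q > p"
    and "q / (q + r) > r + 2 * sqrt (p * q)"
  shows "\<forall>\<^sub>F t in sequentially.
     tv_dist (stat p q) (mu p q r t) \<ge>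
       ((1 + q - p) * (q + r) - q) / ((1 + q - p) * (1 - 2 * p)) * (q / (q + r)) ^ t
       - ((p / (q + r)) * (1 + 1 / (sqrt (p * q) - p)))
         / ((1 - sqrt (p / q) * (r + (1 + q - p)) / (2 * (q + r)))
            * (1 + sqrt (p / q) * (r - (1 + q - p)) / (2 * (q + r))))
         * (r + 2 * sqrt (p * q)) ^ t"
proof -
  interpret birth_death_chain_gap p q r
    by unfold_locales (use assms in auto)
  have half_alpha: "alpha / 2 = ((1 + q - p) * (q + r) - q) / ((1 + q - p) * (1 - 2 * p))"
    unfolding alpha_def by (rule nonzero_mult_div_cancel_left) simp
  txt \<open>Only the positivity of B matters, since the remainder is o(rho^t).\<close>
  from tv_dist_eventually_ge[OF remainder_constant_pos] show ?thesis
    unfolding half_alpha lam_def rho_def .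
qed

end
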